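(* Let $\phi$ be a 3SAT instance on variables $s_1,\dots,s_n$ with clauses $C_1,\dots,C_m$, each clause being a disjunction of exactly three literals. Let $\mathcal{G}=\mathcal{G}(\phi)$ be the edge-weighted graph defined in the context. Then $\phi$ is satisfiable if and only if $\mathcal{G}$ has a realization in $\mathbb{R}$, i.e. a map $x:V(\mathcal{G})\to\mathbb{R}$ with $|x_u-x_v|=d_{uv}$ for every edge $\{u,v\}$.
   Context: The graph $\mathcal{G}(\phi)$ has vertex set consisting of: two vertices $\mathsf{A},\mathsf{B}$; for each variable $s_j$ ($j\le n$) two literal vertices, denoted $s_j$ and $\bar s_j$; and for each clause $i\le m$ eight new vertices $c_{i1},\dots,c_{i8}$. For clause $i$ and $h\in\{1,2,3\}$, let $\mathsf{L}_{ih}$ denote the literal vertex ($s_j$ or $\bar s_j$) of the $h$-th literal of clause $i$. Edges with weights: $\{\mathsf{A},\mathsf{B}\}$ weight 2; for each $j\le n$: $\{s_j,\bar s_j\}$ weight 2, $\{\mathsf{A},s_j\}$ weight 1, $\{\mathsf{A},\bar s_j\}$ weight 1. For each clause $i\le m$: $\{\mathsf{A},c_{i2}\}$ weight 4, $\{\mathsf{A},c_{i7}\}$ weight 2, $\{\mathsf{L}_{i1},c_{i2}\}$ weight 3, $\{\mathsf{L}_{i2},c_{i7}\}$ weight 1, $\{c_{i2},c_{i4}\}$ weight 2, $\{c_{i7},c_{i3}\}$ weight 4, $\{\mathsf{B},c_{i1}\}$ weight 4, $\{c_{i1},c_{i5}\}$ weight 2, $\{c_{i5},c_{i6}\}$ weight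 1, $\{c_{i3},c_{i6}\}$ weight 1, $\{c_{i4},c_{i6}\}$ weight 1, $\{\mathsf{L}_{i3},c_{i8}\}$ weight 4, $\{c_{i6},c_{i8}\}$ weight 2 (edges $\{\mathsf{A},\mathsf{L}_{ih}\}$ of weight 1 are already present). A truth assignment corresponds to positions via: $x_\mathsf{A}=0$, $x_\mathsf{B}=2$, and literal vertex at $1$ means TRUE, at $-1$ means FALSE. *)

theory Defs
  imports Main "HOL.Real"
begin

text \<open>A literal is a pair (j, b): variable index j (variables are s_0,...,s_{n-1});
  b = True means the positive literal s_j, b = False the negated literal (bar s_j).\<close>
type_synonym lit = "nat \<times> bool"

type_synonym clause = "lit \<times> lit \<times> lit"

definition wf_3sat :: "nat \<Rightarrow> clause list \<Rightarrow> bool" where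
  "wf_3sat n phi \<longleftrightarrow>
     (\<forall>(l1, l2, l3) \<in> set phi. fst l1 < n \<and> fst l2 < n \<and> fst l3 < n)"

definition lit_true :: "(nat \<Rightarrow> bool) \<Rightarrow> lit \<Rightarrow> bool" where
  "lit_true \<sigma> l \<longleftrightarrow> \<sigma> (fst l) = snd l"

definition clause_true :: "(nat \<Rightarrow> bool) \<Rightarrow> clause \<Rightarrow> bool" where
  "clause_true \<sigma> c \<longleftrightarrow>
     (case c of (l1, l2, l3) \<Rightarrow> lit_true \<sigma> l1 \<or> lit_true \<sigma> l2 \<or> lit_true \<sigma> l3)"

definition satisfiable :: "clause list \<Rightarrow> bool" where
  "satisfiable phi \<longleftrightarrow> (\<exists>\<sigma>. \<forall>c \<in> set phi. clause_true \<sigma> c)"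

text \<open>Vertices of G(phi): A, B, literal vertices Lit j b (s_j if b, bar s_j otherwise),
  and clause vertices Cv i k = c_{ik} (k = 1..8).\<close>
datatype vertex = VA | VB | Lit nat bool | Cv nat nat

definition LV :: "lit \<Rightarrow> vertex" where
  "LV l = Lit (fst l) (snd l)"

definition clause_edges :: "nat \<Rightarrow> clause \<Rightarrow> (vertex \<times> vertex \<times> real) set" where
  "clause_edges i c = (case c of (l1, l2, l3) \<Rightarrow>
     {(VA, Cv i 2, 4), (VA, Cv i 7, 2), (LV l1, Cv i 2, 3), (LV l2, Cv i 7, 1),
      (Cv i 2, Cv i 4, 2), (Cv i 7, Cv i 3, 4), (VB, Cv i 1, 4), (Cv i 1, Cv i 5, 2),
      (Cv i 5, Cv i 6, 1), (Cv i 3, Cv i 6, 1), (Cv i 4, Cv i 6, 1), (LV l3, Cv i 8, 4),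
      (Cv i 6, Cv i 8, 2)})"

definition G_edges :: "nat \<Rightarrow> clause list \<Rightarrow> (vertex \<times> vertex \<times> real) set" where
  "G_edges n phi =
     {(VA, VB, 2)}
     \<union> (\<Union>j<n. {(Lit j True, Lit j False, 2), (VA, Lit j True, 1), (VA, Lit j False, 1)})
     \<union> (\<Union>i<length phi. clause_edges i (phi ! i))"

definition G_vertices :: "nat \<Rightarrow> clause list \<Rightarrow> vertex set" where
  "G_vertices n phi = {VA, VB} \<union> {Lit j b | j b. j < n}
     \<union> {Cv i k | i k. i < length phi \<and> 1 \<le> k \<and> k \<le> 8}"

definition realizable_R :: "nat \<Rightarrow> clause list \<Rightarrow> bool" where
  "realizable_R n phi \<longleftrightarrow>
     (\<exists>x :: vertex \<Rightarrow> real. \<forall>(u, v, d) \<in> G_edges n phi. \<bar>x u - x v\<bar> = d)"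

end

theory Submission
  imports Defs
begin

text \<open>Normalize a realization by an isometry of the line so that \<open>A\<close> sits at 0 and \<open>B\<close> at 2.
  The unit edges from \<open>A\<close> to \<open>s\<^sub>j\<close> and to its negation, together with the edge of length 2
  between these two, put complementary literal vertices at \<open>1\<close> and \<open>-1\<close>; read \<open>1\<close> as true.
  In a clause gadget the first two literals force \<open>c\<^sub>2\<close> to \<open>\<plusminus>4\<close> and \<open>c\<^sub>7\<close> to \<open>\<plusminus>2\<close>, and
  chasing the remaining distances shows that the gadget cannot be placed when all three literals
  sit at \<open>-1\<close>. Conversely, each of the seven satisfying patterns admits an explicit integer
  placement of the gadget.\<close>

definition realizes :: "('a \<Rightarrow> real) \<Rightarrow> ('a \<times> 'a \<times> real) set \<Rightarrow> bool" where
  "realizes x E \<longleftrightarrow> (\<forall>(u, v, d) \<in> E. \<bar>x u - x v\<bar> = d)"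

lemma realizes_empty [simp]: "realizes x {}"
  by (simp add: realizes_def)

lemma realizes_insert [simp]:
  "realizes x (insert (u, v, d) E) \<longleftrightarrow> \<bar>x u - x v\<bar> = d \<and> realizes x E"
  by (simp add: realizes_def)

lemma realizes_Un [simp]: "realizes x (E \<union> F) \<longleftrightarrow> realizes x E \<and> realizes x F"
  by (simp add: realizes_def ball_Un)

lemma realizes_UN [simp]: "realizes x (\<Union>i\<in>I. E i) \<longleftrightarrow> (\<forall>i\<in>I. realizes x (E i))"
  by (simp add: realizes_def)

lemma realizes_comp_isometry:
  assumes "realizes x E" and "\<And>a b. \<bar>f a - f b\<bar> = \<bar>a - b\<bar>"
  shows "realizes (f \<circ> x) E"
  using assms by (auto simp: realizes_def)

lemma realizable_R_iff: "realizable_R n phi \<longleftrightarrow> (\<exists>x. realizes x (G_edges n phi))"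
  by (simp add: realizable_R_def realizes_def)

lemma realizes_G_edges_iff:
  "realizes x (G_edges n phi) \<longleftrightarrow>
     \<bar>x VA - x VB\<bar> = 2
     \<and> (\<forall>j<n. \<bar>x (Lit j True) - x (Lit j False)\<bar> = 2
              \<and> \<bar>x VA - x (Lit j True)\<bar> = 1 \<and> \<bar>x VA - x (Lit j False)\<bar> = 1)
     \<and> (\<forall>i<length phi. realizes x (clause_edges i (phi ! i)))"
  by (simp add: G_edges_def lessThan_def)

lemma clause_edges_realized_iff:
  "realizes x (clause_edges i (l1, l2, l3)) \<longleftrightarrow>
     \<bar>x VA - x (Cv i 2)\<bar> = 4 \<and> \<bar>x VA - x (Cv i 7)\<bar> = 2
     \<and> \<bar>x (LV l1) - x (Cv i 2)\<bar> = 3 \<and> \<bar>x (LV l2) - x (Cv i 7)\<bar> = 1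
     \<and> \<bar>x (Cv i 2) - x (Cv i 4)\<bar> = 2 \<and> \<bar>x (Cv i 7) - x (Cv i 3)\<bar> = 4
     \<and> \<bar>x VB - x (Cv i 1)\<bar> = 4 \<and> \<bar>x (Cv i 1) - x (Cv i 5)\<bar> = 2
     \<and> \<bar>x (Cv i 5) - x (Cv i 6)\<bar> = 1 \<and> \<bar>x (Cv i 3) - x (Cv i 6)\<bar> = 1
     \<and> \<bar>x (Cv i 4) - x (Cv i 6)\<bar> = 1 \<and> \<bar>x (LV l3) - x (Cv i 8)\<bar> = 4
     \<and> \<bar>x (Cv i 6) - x (Cv i 8)\<bar> = 2"
  by (simp add: clause_edges_def)

lemma clause_gadget_unrealizable_all_false:
  fixes c :: "nat \<Rightarrow> real"
  assumes "\<bar>0 - c 2\<bar> = 4" "\<bar>0 - c 7\<bar> = 2" "\<bar>-1 - c 2\<bar> = 3" "\<bar>-1 - c 7\<bar> = 1"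
    "\<bar>c 2 - c 4\<bar> = 2" "\<bar>c 7 - c 3\<bar> = 4" "\<bar>2 - c 1\<bar> = 4" "\<bar>c 1 - c 5\<bar> = 2"
    "\<bar>c 5 - c 6\<bar> = 1" "\<bar>c 3 - c 6\<bar> = 1" "\<bar>c 4 - c 6\<bar> = 1" "\<bar>-1 - c 8\<bar> = 4"
    "\<bar>c 6 - c 8\<bar> = 2"
  shows False
proof -
  have "c 2 = -4" using assms(1,3) by (auto simp: abs_if split: if_splits)
  then have "c 4 = -2 \<or> c 4 = -6" using assms(5) by (auto simp: abs_if split: if_splits)
  then have via_c4: "c 6 \<in> {-1, -3, -5, -7}" using assms(11) by (auto simp: abs_if split: if_splits)
  have "c 7 = -2" using assms(2,4) by (auto simp: abs_if split: if_splits)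
  then have "c 3 = 2 \<or> c 3 = -6" using assms(6) by (auto simp: abs_if split: if_splits)
  then have via_c3: "c 6 \<in> {3, 1, -5, -7}" using assms(10) by (auto simp: abs_if split: if_splits)
  have "c 8 = 3 \<or> c 8 = -5" using assms(12) by (auto simp: abs_if split: if_splits)
  then have c6: "c 6 = -7" using via_c4 via_c3 assms(13) by (auto simp: abs_if split: if_splits)
  have "c 1 = 6 \<or> c 1 = -2" using assms(7) by (auto simp: abs_if split: if_splits)
  then have "c 5 \<in> {8, 4, 0, -4}" using assms(8) by (auto simp: abs_if split: if_splits)
  then show False using c6 assms(9) by (auto simp: abs_if split: if_splits)
qed

text \<open>Positions of \<open>c\<^sub>1, \<dots>, c\<^sub>8\<close> (list entry \<open>k - 1\<close>) when \<open>A\<close> is at 0, \<open>B\<close> at 2 and the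
  three literals of the clause have the given truth values; the all-false case is a dummy.\<close>
fun gadget_pos :: "bool \<Rightarrow> bool \<Rightarrow> bool \<Rightarrow> nat \<Rightarrow> real" where
  "gadget_pos True True True k = [6, 4, 6, 6, 8, 7, 2, 5] ! (k - 1)"
| "gadget_pos True True False k = [6, 4, 6, 6, 4, 5, 2, 3] ! (k - 1)"
| "gadget_pos True False True k = [6, 4, 2, 2, 4, 3, -2, 5] ! (k - 1)"
| "gadget_pos True False False k = [-2, 4, 2, 2, 0, 1, -2, 3] ! (k - 1)"
| "gadget_pos False True True k = [-2, -4, -2, -2, 0, -1, 2, -3] ! (k - 1)"
| "gadget_pos False True False k = [-2, -4, -2, -2, -4, -3, 2, -5] ! (k - 1)"
| "gadget_pos False False True k = [-2, -4, -6, -6, -4, -5, -2, -3] ! (k - 1)"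
| "gadget_pos False False False k = 0"

definition assignment_realization :: "(nat \<Rightarrow> bool) \<Rightarrow> clause list \<Rightarrow> vertex \<Rightarrow> real" where
  "assignment_realization \<sigma> phi v = (case v of VA \<Rightarrow> 0 | VB \<Rightarrow> 2
     | Lit j b \<Rightarrow> (if \<sigma> j = b then 1 else -1)
     | Cv i k \<Rightarrow> (case phi ! i of (l1, l2, l3) \<Rightarrow>
          gadget_pos (lit_true \<sigma> l1) (lit_true \<sigma> l2) (lit_true \<sigma> l3) k))"

lemma assignment_realization_LV:
  "assignment_realization \<sigma> phi (LV l) = (if lit_true \<sigma> l then 1 else -1)"
  by (simp add: assignment_realization_def LV_def lit_true_def)

lemma assignment_realization_clause_edges:
  assumes "i < length phi" and "clause_true \<sigma> (phi ! i)"
  shows "realizes (assignment_realization \<sigma> phi) (clause_edges i (phi ! i))"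
proof -
  obtain l1 l2 l3 where c: "phi ! i = (l1, l2, l3)" by (cases "phi ! i") auto
  have "lit_true \<sigma> l1 \<or> lit_true \<sigma> l2 \<or> lit_true \<sigma> l3"
    using assms(2) c by (simp add: clause_true_def)
  then show ?thesis
    unfolding c clause_edges_realized_iff assignment_realization_LV
    by (cases "lit_true \<sigma> l1"; cases "lit_true \<sigma> l2"; cases "lit_true \<sigma> l3")
      (simp_all add: assignment_realization_def c)
qed

lemma satisfying_assignment_realizes:
  assumes "\<forall>c \<in> set phi. clause_true \<sigma> c"
  shows "realizes (assignment_realization \<sigma> phi) (G_edges n phi)"
  unfolding realizes_G_edges_iff
  using assms assignment_realization_clause_edges nth_mem
  by (simp add: assignment_realization_def)

lemma normalized_realization:
  assumes "realizes x (G_edges n phi)"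
  obtains y where "realizes y (G_edges n phi)" "y VA = 0" "y VB = 2"
proof
  define s :: real where "s = (if x VB - x VA = 2 then 1 else -1)"
  let ?y = "(\<lambda>a. s * (a - x VA)) \<circ> x"
  show "realizes ?y (G_edges n phi)"
    using assms by (rule realizes_comp_isometry) (simp add: s_def abs_if algebra_simps)
  show "?y VA = 0" by simp
  have "\<bar>x VA - x VB\<bar> = 2" using assms by (simp add: realizes_G_edges_iff)
  then show "?y VB = 2" by (auto simp: s_def abs_if split: if_splits)
qed

lemma normalized_realization_LV:
  assumes "realizes y (G_edges n phi)" and "y VA = 0" and "fst l < n"
  shows "y (LV l) = (if lit_true (\<lambda>j. y (Lit j True) = 1) l then 1 else -1)"
proof -
  obtain j b where l: "l = (j, b)" by (cases l)
  have "\<bar>y (Lit j True) - y (Lit j False)\<bar> = 2"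
    "\<bar>y (Lit j True)\<bar> = 1" "\<bar>y (Lit j False)\<bar> = 1"
    using assms l by (auto simp: realizes_G_edges_iff)
  then show ?thesis
    unfolding l by (cases b) (auto simp: LV_def lit_true_def abs_if split: if_splits)
qed

lemma normalized_realization_satisfies:
  assumes wf: "wf_3sat n phi"
    and y: "realizes y (G_edges n phi)" "y VA = 0" "y VB = 2"
    and "c \<in> set phi"
  shows "clause_true (\<lambda>j. y (Lit j True) = 1) c"
proof (rule ccontr)
  assume unsat: "\<not> clause_true (\<lambda>j. y (Lit j True) = 1) c"
  obtain i where i: "i < length phi" "phi ! i = c" using \<open>c \<in> set phi\<close> by (auto simp: in_set_conv_nth)
  obtain l1 l2 l3 where c: "c = (l1, l2, l3)" by (cases c) auto
  have "fst l1 < n" "fst l2 < n" "fst l3 < n"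
    using wf \<open>c \<in> set phi\<close> c by (auto simp: wf_3sat_def)
  then have "y (LV l1) = -1" "y (LV l2) = -1" "y (LV l3) = -1"
    using unsat c normalized_realization_LV[OF y(1,2)] by (simp_all add: clause_true_def)
  moreover have "realizes y (clause_edges i (l1, l2, l3))"
    using y(1) i c by (auto simp: realizes_G_edges_iff)
  ultimately show False
    using y(2,3) unfolding clause_edges_realized_iff
    by (intro clause_gadget_unrealizable_all_false[of "\<lambda>k. y (Cv i k)"]) simp_all
qed

theorem theorem1:
  fixes n :: nat and phi :: "clause list"
  assumes "wf_3sat n phi"
  shows "satisfiable phi \<longleftrightarrow> realizable_R n phi"
proof
  assume "satisfiable phi"
  then obtain \<sigma> where "\<forall>c \<in> set phi. clause_true \<sigma> c" unfolding satisfiable_def by blast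
  then show "realizable_R n phi"
    unfolding realizable_R_iff by (blast intro: satisfying_assignment_realizes)
next
  assume "realizable_R n phi"
  then obtain x where "realizes x (G_edges n phi)" unfolding realizable_R_iff by blast
  then obtain y where "realizes y (G_edges n phi)" "y VA = 0" "y VB = 2"
    by (rule normalized_realization)
  then show "satisfiable phi"
    unfolding satisfiable_def using normalized_realization_satisfies[OF assms] by blast
qed

end
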